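(* Let $R$ be a principal ideal domain and let $a\in R$ be nonzero. Assume that $a$ has a non-unit bounded factor, i.e. there exist $r,s,p\in R$ with $a=rps$ and $p$ a bounded non-unit. Then $a$ is c-irreducible if and only if $a$ is irreducible.
   Context: A principal ideal domain (PID) is a (not necessarily commutative) domain in which every left ideal and every right ideal is principal. An element $p$ is bounded if $Rp$ contains a nonzero two-sided ideal. A non-unit $a$ is irreducible if $a=bc$ implies $b$ or $c$ is a unit. Elements $b,c$ are similar if $R/Rb\cong R/Rc$ as left $R$-modules. A nonzero $a$ is c-reducible if $a=bb'=c'c$ for some non-units $b,b',c',c\in R$ with $b$ similar to $c$; an element that is not c-reducible is c-irreducible. *)

theory Defs
  imports Main
begin

text \<open>Noncommutative rings are modelled by the type class ring_1 (not necessarily commutative).\<close>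

definition is_unit :: "'a::ring_1 \<Rightarrow> bool" where
  "is_unit u \<longleftrightarrow> (\<exists>v. u * v = 1 \<and> v * u = 1)"

definition additive_subgroup :: "'a::ring_1 set \<Rightarrow> bool" where
  "additive_subgroup I \<longleftrightarrow> 0 \<in> I \<and> (\<forall>x\<in>I. \<forall>y\<in>I. x + y \<in> I) \<and> (\<forall>x\<in>I. - x \<in> I)"

definition left_ideal :: "'a::ring_1 set \<Rightarrow> bool" where
  "left_ideal I \<longleftrightarrow> additive_subgroup I \<and> (\<forall>r x. x \<in> I \<longrightarrow> r * x \<in> I)"

definition right_ideal :: "'a::ring_1 set \<Rightarrow> bool" where
  "right_ideal I \<longleftrightarrow> additive_subgroup I \<and> (\<forall>r x. x \<in> I \<longrightarrow> x * r \<in> I)"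

definition two_sided_ideal :: "'a::ring_1 set \<Rightarrow> bool" where
  "two_sided_ideal I \<longleftrightarrow> left_ideal I \<and> right_ideal I"

definition lprinc :: "'a::ring_1 \<Rightarrow> 'a set" where
  "lprinc b = {x * b | x. True}"

definition rprinc :: "'a::ring_1 \<Rightarrow> 'a set" where
  "rprinc b = {b * x | x. True}"

definition is_PID :: "'a::ring_1 itself \<Rightarrow> bool" where
  "is_PID (_::'a itself) \<longleftrightarrow>
     (0::'a) \<noteq> 1 \<and>
     (\<forall>x y::'a. x * y = 0 \<longrightarrow> x = 0 \<or> y = 0) \<and>
     (\<forall>I::'a set. left_ideal I \<longrightarrow> (\<exists>g. I = lprinc g)) \<and>
     (\<forall>I::'a set. right_ideal I \<longrightarrow> (\<exists>g. I = rprinc g))"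

definition bounded_elem :: "'a::ring_1 \<Rightarrow> bool" where
  "bounded_elem p \<longleftrightarrow> (\<exists>I. two_sided_ideal I \<and> I \<noteq> {0} \<and> I \<subseteq> lprinc p)"

definition irreducible_elem :: "'a::ring_1 \<Rightarrow> bool" where
  "irreducible_elem a \<longleftrightarrow> \<not> is_unit a \<and> (\<forall>b c. a = b * c \<longrightarrow> is_unit b \<or> is_unit c)"

text \<open>Similarity: R/Rb and R/Rc are isomorphic left R-modules.  Such an isomorphism
  is given by a left R-linear map f : R \<rightarrow> R (every left module map out of a
  cyclic quotient of R lifts to R) with f(x) \<in> Rc iff x \<in> Rb (well defined and
  injective on the quotient) and surjective modulo Rc.\<close>
definition similar :: "'a::ring_1 \<Rightarrow> 'a \<Rightarrow> bool" where
  "similar b c \<longleftrightarrow> (\<exists>f::'a \<Rightarrow> 'a.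
      (\<forall>x y. f (x + y) = f x + f y) \<and>
      (\<forall>r x. f (r * x) = r * f x) \<and>
      (\<forall>x. f x \<in> lprinc c \<longleftrightarrow> x \<in> lprinc b) \<and>
      (\<forall>y. \<exists>x. y - f x \<in> lprinc c))"

definition c_reducible :: "'a::ring_1 \<Rightarrow> bool" where
  "c_reducible a \<longleftrightarrow> a \<noteq> 0 \<and> (\<exists>b b' c' c. a = b * b' \<and> a = c' * c \<and>
      \<not> is_unit b \<and> \<not> is_unit b' \<and> \<not> is_unit c' \<and> \<not> is_unit c \<and> similar b c)"

definition c_irreducible :: "'a::ring_1 \<Rightarrow> bool" where
  "c_irreducible a \<longleftrightarrow> \<not> c_reducible a"

end

theory Submission
  imports Defs
begin

text \<open>An irreducible element is trivially c-irreducible. Conversely, let \<open>a\<close> be reducible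
  but not c-reducible. The bounded factor \<open>p\<close> yields a nonzero invariant element \<open>z \<in> Rp\<close>
  (\<open>Rz = zR\<close>, a generator of a two-sided ideal inside \<open>Rp\<close>). Fitting's lemma for left
  multiplication by \<open>z\<close> on \<open>R/Ra\<close> leaves three cases: a nontrivial direct decomposition
  of \<open>R/Ra\<close>, which makes \<open>a\<close> c-reducible; \<open>z\<close> injective, which forces \<open>p\<close> to be a unit;
  or \<open>z\<^sup>n \<in> Ra\<close>. In the last case write \<open>a = b c = b' c'\<close> with \<open>c\<close> and \<open>b'\<close>
  irreducible. Then \<open>z\<^sup>n\<close> lies in the bound of \<open>Rb'\<close> (its largest two-sided ideal),
  which is generated by an invariant \<open>w\<close>; the same trichotomy for \<open>w\<close> puts the bound
  inside \<open>Rc\<close>, and a minimality argument makes \<open>b'\<close> similar to \<open>c\<close>, so \<open>a\<close> is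
  c-reducible after all.\<close>

section \<open>Principal one-sided ideals\<close>

lemma lprinc_iff: "x \<in> lprinc b \<longleftrightarrow> (\<exists>k. x = k * b)"
  by (auto simp: lprinc_def)

lemma rprinc_iff: "x \<in> rprinc b \<longleftrightarrow> (\<exists>k. x = b * k)"
  by (auto simp: rprinc_def)

lemma mult_in_lprinc [simp]: "k * b \<in> lprinc b"
  by (auto simp: lprinc_iff)

lemma mult_in_rprinc [simp]: "b * k \<in> rprinc b"
  by (auto simp: rprinc_iff)

lemma lprinc_self [simp]: "b \<in> lprinc b"
  using mult_in_lprinc[of 1 b] by simp

lemma rprinc_self [simp]: "b \<in> rprinc b"
  using mult_in_rprinc[of b 1] by simp

lemma lprinc_trans: "x \<in> lprinc b \<Longrightarrow> b \<in> lprinc c \<Longrightarrow> x \<in> lprinc c"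
  by (metis lprinc_iff mult.assoc)

lemma left_idealI:
  assumes "0 \<in> I" "\<And>x y. x \<in> I \<Longrightarrow> y \<in> I \<Longrightarrow> x + y \<in> I" "\<And>r x. x \<in> I \<Longrightarrow> r * x \<in> I"
  shows "left_ideal I"
  using assms(3)[of _ "- 1"] assms unfolding left_ideal_def additive_subgroup_def by simp

lemma right_idealI:
  assumes "0 \<in> I" "\<And>x y. x \<in> I \<Longrightarrow> y \<in> I \<Longrightarrow> x + y \<in> I" "\<And>r x. x \<in> I \<Longrightarrow> x * r \<in> I"
  shows "right_ideal I"
  using assms(3)[of _ "- 1"] assms unfolding right_ideal_def additive_subgroup_def by simp

lemma
  assumes "left_ideal I"
  shows left_ideal_zero: "0 \<in> I"
    and left_ideal_add: "x \<in> I \<Longrightarrow> y \<in> I \<Longrightarrow> x + y \<in> I"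
    and left_ideal_mult: "x \<in> I \<Longrightarrow> r * x \<in> I"
  using assms unfolding left_ideal_def additive_subgroup_def by blast+

lemma left_ideal_diff: "left_ideal I \<Longrightarrow> x \<in> I \<Longrightarrow> y \<in> I \<Longrightarrow> x - y \<in> I"
  unfolding left_ideal_def additive_subgroup_def by (metis diff_conv_add_uminus)

lemma
  assumes "right_ideal I"
  shows right_ideal_zero: "0 \<in> I"
    and right_ideal_add: "x \<in> I \<Longrightarrow> y \<in> I \<Longrightarrow> x + y \<in> I"
    and right_ideal_mult: "x \<in> I \<Longrightarrow> x * r \<in> I"
  using assms unfolding right_ideal_def additive_subgroup_def by blast+

lemma left_ideal_lprinc: "left_ideal (lprinc b)"
proof (rule left_idealI)
  show "0 \<in> lprinc b" using mult_in_lprinc[of 0 b] by simp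
  show "x + y \<in> lprinc b" if "x \<in> lprinc b" "y \<in> lprinc b" for x y
    using that by (auto simp: lprinc_iff distrib_right[symmetric])
  show "r * x \<in> lprinc b" if "x \<in> lprinc b" for r x
    using that by (auto simp: lprinc_iff mult.assoc[symmetric])
qed

lemma right_ideal_rprinc: "right_ideal (rprinc b)"
proof (rule right_idealI)
  show "0 \<in> rprinc b" using mult_in_rprinc[of b 0] by simp
  show "x + y \<in> rprinc b" if "x \<in> rprinc b" "y \<in> rprinc b" for x y
    using that by (auto simp: rprinc_iff distrib_left[symmetric])
  show "x * r \<in> rprinc b" if "x \<in> rprinc b" for r x
    using that by (auto simp: rprinc_iff mult.assoc)
qed

lemmas lprinc_zero [simp] = left_ideal_zero[OF left_ideal_lprinc]
lemmas lprinc_add = left_ideal_add[OF left_ideal_lprinc]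
lemmas lprinc_diff = left_ideal_diff[OF left_ideal_lprinc]
lemmas lprinc_mult = left_ideal_mult[OF left_ideal_lprinc]

lemma left_ideal_subset: "left_ideal I \<Longrightarrow> b \<in> I \<Longrightarrow> lprinc b \<subseteq> I"
  by (auto simp: lprinc_iff left_ideal_mult)

lemma right_ideal_subset: "right_ideal I \<Longrightarrow> b \<in> I \<Longrightarrow> rprinc b \<subseteq> I"
  by (auto simp: rprinc_iff right_ideal_mult)

lemma left_ideal_Int: "left_ideal I \<Longrightarrow> left_ideal J \<Longrightarrow> left_ideal (I \<inter> J)"
  unfolding left_ideal_def additive_subgroup_def by blast

lemma left_ideal_UNIV: "left_ideal UNIV"
  unfolding left_ideal_def additive_subgroup_def by blast

lemma left_ideal_Union_chain:
  assumes "C \<noteq> {}" "chain\<^sub>\<subseteq> C" "\<And>X. X \<in> C \<Longrightarrow> left_ideal X"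
  shows "left_ideal (\<Union>C)"
proof (rule left_idealI)
  show "0 \<in> \<Union>C" using assms(1) left_ideal_zero[OF assms(3)] by blast
  show "x + y \<in> \<Union>C" if xy: "x \<in> \<Union>C" "y \<in> \<Union>C" for x y
  proof -
    obtain X Y where XY: "X \<in> C" "Y \<in> C" "x \<in> X" "y \<in> Y" using xy by blast
    then have "X \<subseteq> Y \<or> Y \<subseteq> X" using assms(2) by (auto simp: chain_subset_def)
    then show ?thesis using XY left_ideal_add[OF assms(3)] by blast
  qed
  show "r * x \<in> \<Union>C" if "x \<in> \<Union>C" for r x
    using that left_ideal_mult[OF assms(3)] by blast
qed

lemma right_ideal_Union_chain:
  assumes "C \<noteq> {}" "chain\<^sub>\<subseteq> C" "\<And>X. X \<in> C \<Longrightarrow> right_ideal X"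
  shows "right_ideal (\<Union>C)"
proof (rule right_idealI)
  show "0 \<in> \<Union>C" using assms(1) right_ideal_zero[OF assms(3)] by blast
  show "x + y \<in> \<Union>C" if xy: "x \<in> \<Union>C" "y \<in> \<Union>C" for x y
  proof -
    obtain X Y where XY: "X \<in> C" "Y \<in> C" "x \<in> X" "y \<in> Y" using xy by blast
    then have "X \<subseteq> Y \<or> Y \<subseteq> X" using assms(2) by (auto simp: chain_subset_def)
    then show ?thesis using XY right_ideal_add[OF assms(3)] by blast
  qed
  show "x * r \<in> \<Union>C" if "x \<in> \<Union>C" for r x
    using that right_ideal_mult[OF assms(3)] by blast
qed

lemma is_unit_mult: "is_unit (x::'a::ring_1) \<Longrightarrow> is_unit y \<Longrightarrow> is_unit (x * y)"
  unfolding is_unit_def by (metis mult.assoc mult_1_left)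

lemma irreducible_unit_mult:
  assumes u: "is_unit u" and c: "irreducible_elem c"
  shows "irreducible_elem (u * c)"
proof -
  obtain u' where u': "u * u' = 1" "u' * u = 1" "is_unit u'" using u unfolding is_unit_def by blast
  have c_eq: "c = u' * (u * c)" using u'(2) by (simp flip: mult.assoc)
  have "\<not> is_unit (u * c)"
    using c is_unit_mult[OF u'(3)] c_eq unfolding irreducible_elem_def by metis
  moreover have "is_unit x \<or> is_unit y" if "u * c = x * y" for x y
  proof -
    have "c = (u' * x) * y" using c_eq that by (simp add: mult.assoc)
    then have "is_unit (u' * x) \<or> is_unit y" using c unfolding irreducible_elem_def by blast
    moreover have "x = u * (u' * x)" using u'(1) by (simp flip: mult.assoc)
    ultimately show ?thesis using is_unit_mult[OF u] by metis
  qed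
  ultimately show ?thesis unfolding irreducible_elem_def by blast
qed

lemma irreducible_mult_unit:
  assumes u: "is_unit u" and b: "irreducible_elem b"
  shows "irreducible_elem (b * u)"
proof -
  obtain u' where u': "u * u' = 1" "u' * u = 1" "is_unit u'" using u unfolding is_unit_def by blast
  have b_eq: "b = (b * u) * u'" using u'(1) by (simp add: mult.assoc)
  have "\<not> is_unit (b * u)"
    using b is_unit_mult[OF _ u'(3)] b_eq unfolding irreducible_elem_def by metis
  moreover have "is_unit x \<or> is_unit y" if "b * u = x * y" for x y
  proof -
    have "b = x * (y * u')" using b_eq that by (simp add: mult.assoc)
    then have "is_unit x \<or> is_unit (y * u')" using b unfolding irreducible_elem_def by blast
    moreover have "y = (y * u') * u" using u'(2) by (simp add: mult.assoc)
    ultimately show ?thesis using is_unit_mult[OF _ u] by metis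
  qed
  ultimately show ?thesis unfolding irreducible_elem_def by blast
qed

lemma lprinc_unit:
  assumes "is_unit u"
  shows "lprinc u = UNIV"
proof -
  obtain v where "v * u = 1" using assms unfolding is_unit_def by blast
  then have "x = (x * v) * u" for x by (simp add: mult.assoc)
  then show ?thesis by (metis UNIV_eq_I mult_in_lprinc)
qed

lemma lprinc_unit_mult:
  assumes "is_unit u"
  shows "lprinc (u * x) = lprinc x"
proof -
  obtain v where "v * u = 1" using assms unfolding is_unit_def by blast
  then have "x = v * (u * x)" by (simp flip: mult.assoc)
  then have "x \<in> lprinc (u * x)" by (metis mult_in_lprinc)
  moreover have "u * x \<in> lprinc x" by simp
  ultimately show ?thesis using left_ideal_subset[OF left_ideal_lprinc] by blast
qed

lemma similar_by_right_mult:
  assumes "\<And>x. x * \<xi> \<in> lprinc c \<longleftrightarrow> x \<in> lprinc b" "\<And>y. \<exists>x. y - x * \<xi> \<in> lprinc c"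
  shows "similar b c"
  unfolding similar_def
  using assms by (intro exI[of _ "\<lambda>x. x * \<xi>"]) (simp add: distrib_right mult.assoc)

lemma c_reducibleI:
  "a \<noteq> 0 \<Longrightarrow> a = b * b' \<Longrightarrow> a = c' * c \<Longrightarrow> \<not> is_unit b \<Longrightarrow> \<not> is_unit b' \<Longrightarrow>
    \<not> is_unit c' \<Longrightarrow> \<not> is_unit c \<Longrightarrow> similar b c \<Longrightarrow> c_reducible a"
  unfolding c_reducible_def by blast

lemma c_irreducible_if_irreducible: "irreducible_elem a \<Longrightarrow> c_irreducible a"
  unfolding c_irreducible_def c_reducible_def irreducible_elem_def by blast

section \<open>Invariant elements acting on \<open>R/Ra\<close>\<close>

definition invariant_elem :: "'a::ring_1 \<Rightarrow> bool" where
  "invariant_elem w \<longleftrightarrow> lprinc w = rprinc w"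

lemma invariant_elemI:
  assumes "\<And>x. \<exists>y. w * x = y * w" "\<And>x. \<exists>y. x * w = w * y"
  shows "invariant_elem w"
  unfolding invariant_elem_def
proof (intro equalityI subsetI)
  show "x \<in> rprinc w" if "x \<in> lprinc w" for x
    using that assms(2) by (auto simp: lprinc_iff rprinc_iff)
  show "x \<in> lprinc w" if "x \<in> rprinc w" for x
    using that assms(1) by (auto simp: lprinc_iff rprinc_iff)
qed

lemma
  assumes "invariant_elem w"
  shows invariant_swap_right: "\<exists>y. w * x = y * w"
    and invariant_swap_left: "\<exists>y. x * w = w * y"
  using assms mult_in_rprinc[of w x] mult_in_lprinc[of x w]
  unfolding invariant_elem_def by (metis lprinc_iff, metis rprinc_iff)

lemma invariant_elem_mult:
  assumes u: "invariant_elem u" and v: "invariant_elem v"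
  shows "invariant_elem (u * v)"
proof (rule invariant_elemI)
  fix x
  obtain y where "v * x = y * v" using invariant_swap_right[OF v] by blast
  moreover obtain y' where "u * y = y' * u" using invariant_swap_right[OF u] by blast
  ultimately have "u * v * x = y' * (u * v)" by (metis mult.assoc)
  then show "\<exists>y. u * v * x = y * (u * v)" by blast
next
  fix x
  obtain y where "x * u = u * y" using invariant_swap_left[OF u] by blast
  moreover obtain y' where "y * v = v * y'" using invariant_swap_left[OF v] by blast
  ultimately have "x * (u * v) = u * v * y'" by (metis mult.assoc)
  then show "\<exists>y. x * (u * v) = u * v * y" by blast
qed

lemma invariant_elem_power: "invariant_elem w \<Longrightarrow> invariant_elem (w ^ n)"
proof (induction n)
  case 0
  show ?case by (rule invariant_elemI) auto
next
  case (Suc n)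
  then show ?case by (simp add: invariant_elem_mult)
qed

text \<open>The preimages in \<open>R\<close> of the kernel and of the image of left multiplication by \<open>z\<close>
  on \<open>R/Ra\<close>.\<close>

definition kernel_mod :: "'a::ring_1 \<Rightarrow> 'a \<Rightarrow> 'a set" where
  "kernel_mod z a = {x. z * x \<in> lprinc a}"

definition image_mod :: "'a::ring_1 \<Rightarrow> 'a \<Rightarrow> 'a set" where
  "image_mod z a = {z * y + k * a | y k. True}"

lemma lprinc_subset_kernel_mod: "lprinc a \<subseteq> kernel_mod z a"
  by (auto simp: kernel_mod_def intro: lprinc_mult)

lemma mult_in_image_mod: "z * y \<in> image_mod z a"
proof -
  have "z * y = z * y + 0 * a" by simp
  then show ?thesis unfolding image_mod_def by blast
qed

lemma lprinc_subset_image_mod: "lprinc a \<subseteq> image_mod z a"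
proof
  fix x assume "x \<in> lprinc a"
  then obtain k where "x = z * 0 + k * a" by (auto simp: lprinc_iff)
  then show "x \<in> image_mod z a" unfolding image_mod_def by blast
qed

lemma left_ideal_kernel_mod:
  assumes z: "invariant_elem z"
  shows "left_ideal (kernel_mod z a)"
proof (rule left_idealI)
  show "0 \<in> kernel_mod z a" by (simp add: kernel_mod_def)
  show "x + y \<in> kernel_mod z a" if "x \<in> kernel_mod z a" "y \<in> kernel_mod z a" for x y
    using that by (simp add: kernel_mod_def distrib_left lprinc_add)
  show "r * x \<in> kernel_mod z a" if x: "x \<in> kernel_mod z a" for r x
  proof -
    obtain r' where "z * r = r' * z" using invariant_swap_right[OF z] by blast
    then have "z * (r * x) = r' * (z * x)" by (metis mult.assoc)
    then show ?thesis using x by (simp add: kernel_mod_def lprinc_mult)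
  qed
qed

lemma left_ideal_image_mod:
  assumes z: "invariant_elem z"
  shows "left_ideal (image_mod z a)"
proof (rule left_idealI)
  show "0 \<in> image_mod z a" using mult_in_image_mod[of z 0 a] by simp
  show "x + y \<in> image_mod z a" if xy: "x \<in> image_mod z a" "y \<in> image_mod z a" for x y
  proof -
    obtain y1 k1 y2 k2 where "x = z * y1 + k1 * a" "y = z * y2 + k2 * a"
      using xy by (auto simp: image_mod_def)
    then have "x + y = z * (y1 + y2) + (k1 + k2) * a" by (simp add: algebra_simps)
    then show ?thesis unfolding image_mod_def by blast
  qed
  show "r * x \<in> image_mod z a" if x_mem: "x \<in> image_mod z a" for r x
  proof -
    obtain y k where x: "x = z * y + k * a" using x_mem by (auto simp: image_mod_def)
    obtain r' where "r * z = z * r'" using invariant_swap_left[OF z] by blast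
    then have "r * x = z * (r' * y) + (r * k) * a" by (simp add: x algebra_simps flip: mult.assoc)
    then show ?thesis unfolding image_mod_def by blast
  qed
qed

lemma kernel_mod_power_mono: "m \<le> n \<Longrightarrow> kernel_mod (z ^ m) a \<subseteq> kernel_mod (z ^ n) a"
proof (rule lift_Suc_mono_le[of "\<lambda>n. kernel_mod (z ^ n) a"])
  show "kernel_mod (z ^ n) a \<subseteq> kernel_mod (z ^ Suc n) a" for n
    by (auto simp: kernel_mod_def mult.assoc lprinc_mult)
qed

lemma image_mod_power_antimono: "m \<le> n \<Longrightarrow> image_mod (z ^ n) a \<subseteq> image_mod (z ^ m) a"
proof (rule lift_Suc_antimono_le[of "\<lambda>n. image_mod (z ^ n) a"])
  show "image_mod (z ^ Suc n) a \<subseteq> image_mod (z ^ n) a" for n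
  proof
    fix x assume "x \<in> image_mod (z ^ Suc n) a"
    then obtain y k where "x = z ^ Suc n * y + k * a" by (auto simp: image_mod_def)
    then have "x = z ^ n * (z * y) + k * a" by (simp only: power_Suc2 mult.assoc)
    then show "x \<in> image_mod (z ^ n) a" unfolding image_mod_def by blast
  qed
qed

lemma kernel_mod_power_subset:
  assumes "kernel_mod z a \<subseteq> lprinc a"
  shows "kernel_mod (z ^ n) a \<subseteq> lprinc a"
proof (induction n)
  case 0
  show ?case by (simp add: kernel_mod_def)
next
  case (Suc n)
  show ?case
  proof
    fix x assume "x \<in> kernel_mod (z ^ Suc n) a"
    then have "z ^ n * x \<in> kernel_mod z a" by (simp add: kernel_mod_def mult.assoc)
    then have "x \<in> kernel_mod (z ^ n) a" using assms by (auto simp: kernel_mod_def)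
    then show "x \<in> lprinc a" using Suc.IH by blast
  qed
qed

text \<open>The largest two-sided ideal contained in \<open>Rb\<close> (the bound of \<open>Rb\<close>).\<close>

definition bound_ideal :: "'a::ring_1 \<Rightarrow> 'a set" where
  "bound_ideal b = {x. \<forall>y. x * y \<in> lprinc b}"

lemma two_sided_ideal_bound_ideal: "two_sided_ideal (bound_ideal b)"
proof -
  have "0 \<in> bound_ideal b" "\<And>x y. x \<in> bound_ideal b \<Longrightarrow> y \<in> bound_ideal b \<Longrightarrow> x + y \<in> bound_ideal b"
    by (simp_all add: bound_ideal_def distrib_right lprinc_add)
  moreover have "\<And>r x. x \<in> bound_ideal b \<Longrightarrow> r * x \<in> bound_ideal b"
    by (simp add: bound_ideal_def mult.assoc lprinc_mult)
  moreover have "\<And>r x. x \<in> bound_ideal b \<Longrightarrow> x * r \<in> bound_ideal b"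
    by (simp add: bound_ideal_def mult.assoc)
  ultimately show ?thesis
    unfolding two_sided_ideal_def by (simp add: left_idealI right_idealI)
qed

lemma bound_ideal_subset: "bound_ideal b \<subseteq> lprinc b"
  unfolding bound_ideal_def by (metis (mono_tags) mem_Collect_eq mult_1_right subsetI)

lemma invariant_in_bound_ideal:
  assumes "invariant_elem z" "z \<in> lprinc b"
  shows "z \<in> bound_ideal b"
  unfolding bound_ideal_def
proof (intro CollectI allI)
  fix y
  obtain y' where "z * y = y' * z" using invariant_swap_right[OF assms(1)] by blast
  then show "z * y \<in> lprinc b" using lprinc_mult[OF assms(2)] by metis
qed

section \<open>Principal ideal domains\<close>

context
  assumes PID: "is_PID TYPE('a::ring_1)"
begin

lemma PID_no_zero_divisors: "(x::'a) * y = 0 \<Longrightarrow> x = 0 \<or> y = 0"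
  using PID unfolding is_PID_def by blast

lemma PID_zero_neq_one: "(0::'a) \<noteq> 1"
  using PID unfolding is_PID_def by blast

lemma PID_left_principal: "left_ideal (I::'a set) \<Longrightarrow> \<exists>g. I = lprinc g"
  using PID unfolding is_PID_def by blast

lemma PID_right_principal: "right_ideal (I::'a set) \<Longrightarrow> \<exists>g. I = rprinc g"
  using PID unfolding is_PID_def by blast

lemma PID_mult_right_cancel: "(x::'a) * z = y * z \<Longrightarrow> z \<noteq> 0 \<Longrightarrow> x = y"
  using PID_no_zero_divisors[of "x - y" z] by (simp add: left_diff_distrib)

lemma PID_mult_left_cancel: "(z::'a) * x = z * y \<Longrightarrow> z \<noteq> 0 \<Longrightarrow> x = y"
  using PID_no_zero_divisors[of z "x - y"] by (simp add: right_diff_distrib)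

lemma PID_power_nonzero: "(z::'a) \<noteq> 0 \<Longrightarrow> z ^ n \<noteq> 0"
  by (induction n) (use PID_zero_neq_one PID_no_zero_divisors in auto)

lemma mult_eq_1_is_unit:
  assumes xy: "(x::'a) * y = 1"
  shows "is_unit x" "is_unit y"
proof -
  have "y \<noteq> 0" using xy PID_zero_neq_one by auto
  have "(y * x) * y = 1 * y" by (simp add: mult.assoc xy)
  then have "y * x = 1" using PID_mult_right_cancel \<open>y \<noteq> 0\<close> by blast
  then show "is_unit x" "is_unit y" using xy unfolding is_unit_def by blast+
qed

lemma is_unit_multD:
  assumes "is_unit ((x::'a) * y)"
  shows "is_unit x" "is_unit y"
proof -
  obtain v where v: "x * y * v = 1" "v * (x * y) = 1" using assms unfolding is_unit_def by blast
  have "x * (y * v) = 1" "(v * x) * y = 1" using v by (simp_all add: mult.assoc)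
  then show "is_unit x" "is_unit y" using mult_eq_1_is_unit by blast+
qed

lemma is_unit_iff_one_in_lprinc: "is_unit (b::'a) \<longleftrightarrow> 1 \<in> lprinc b"
proof
  show "1 \<in> lprinc b" if "is_unit b" using lprinc_unit[OF that] by simp
  show "is_unit b" if one: "1 \<in> lprinc b"
  proof -
    obtain k where "k * b = 1" using one by (auto simp: lprinc_iff)
    then show ?thesis by (rule mult_eq_1_is_unit(2))
  qed
qed

lemma irreducible_comaximal:
  assumes p: "irreducible_elem (p::'a)" and x: "x \<notin> lprinc p"
  shows "\<exists>\<mu> \<nu>. 1 = \<mu> * x + \<nu> * p"
proof -
  define L where "L = {m * x + n * p | m n. True}"
  have "left_ideal L"
  proof (rule left_idealI)
    have "0 = 0 * x + 0 * p" by simp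
    then show "0 \<in> L" unfolding L_def by blast
    show "u + v \<in> L" if uv: "u \<in> L" "v \<in> L" for u v
    proof -
      obtain m n m' n' where "u = m * x + n * p" "v = m' * x + n' * p" using uv by (auto simp: L_def)
      then have "u + v = (m + m') * x + (n + n') * p" by (simp add: algebra_simps)
      then show ?thesis unfolding L_def by blast
    qed
    show "r * u \<in> L" if u: "u \<in> L" for r u
    proof -
      obtain m n where "u = m * x + n * p" using u by (auto simp: L_def)
      then have "r * u = (r * m) * x + (r * n) * p" by (simp add: algebra_simps)
      then show ?thesis unfolding L_def by blast
    qed
  qed
  then obtain d where d: "L = lprinc d" using PID_left_principal by blast
  have "p = 0 * x + 1 * p" "x = 1 * x + 0 * p" by simp_all
  then have "p \<in> lprinc d" "x \<in> lprinc d" using d unfolding L_def by blast+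
  then obtain v where v: "p = v * d" by (auto simp: lprinc_iff)
  then have "is_unit v \<or> is_unit d" using p unfolding irreducible_elem_def by blast
  moreover have "\<not> is_unit v"
    using lprinc_unit_mult[of v d] v \<open>x \<in> lprinc d\<close> x by auto
  ultimately have "1 \<in> L" using d lprinc_unit by auto
  then show ?thesis unfolding L_def by blast
qed

lemma left_ideal_maximal:
  assumes "S \<noteq> {}" "\<And>X. X \<in> S \<Longrightarrow> left_ideal (X::'a set)"
  shows "\<exists>M\<in>S. \<forall>X\<in>S. M \<subseteq> X \<longrightarrow> X = M"
proof (rule Zorn_Lemma2, intro ballI)
  fix C assume C: "C \<in> chains S"
  then have CS: "C \<subseteq> S" and chain: "chain\<^sub>\<subseteq> C" by (auto simp: chains_def)
  show "\<exists>U\<in>S. \<forall>X\<in>C. X \<subseteq> U"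
  proof (cases "C = {}")
    case True
    then show ?thesis using assms(1) by blast
  next
    case False
    then have "left_ideal (\<Union>C)" using left_ideal_Union_chain chain CS assms(2) by blast
    then obtain g where g: "\<Union>C = lprinc g" using PID_left_principal by blast
    then obtain X where X: "X \<in> C" "g \<in> X" using lprinc_self by blast
    then have "\<Union>C \<subseteq> X" using g left_ideal_subset assms(2) CS by blast
    then show ?thesis using X(1) CS by blast
  qed
qed

lemma right_ideal_maximal:
  assumes "S \<noteq> {}" "\<And>X. X \<in> S \<Longrightarrow> right_ideal (X::'a set)"
  shows "\<exists>M\<in>S. \<forall>X\<in>S. M \<subseteq> X \<longrightarrow> X = M"
proof (rule Zorn_Lemma2, intro ballI)
  fix C assume C: "C \<in> chains S"
  then have CS: "C \<subseteq> S" and chain: "chain\<^sub>\<subseteq> C" by (auto simp: chains_def)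
  show "\<exists>U\<in>S. \<forall>X\<in>C. X \<subseteq> U"
  proof (cases "C = {}")
    case True
    then show ?thesis using assms(1) by blast
  next
    case False
    then have "right_ideal (\<Union>C)" using right_ideal_Union_chain chain CS assms(2) by blast
    then obtain g where g: "\<Union>C = rprinc g" using PID_right_principal by blast
    then obtain X where X: "X \<in> C" "g \<in> X" using rprinc_self by blast
    then have "\<Union>C \<subseteq> X" using g right_ideal_subset assms(2) CS by blast
    then show ?thesis using X(1) CS by blast
  qed
qed

text \<open>Writing \<open>w = e * d\<close>, the map \<open>Rd \<mapsto> eR\<close> reverses inclusions, so maximal right ideals
  \<open>eR\<close> give minimal left ideals \<open>Rd\<close>.\<close>

lemma left_ideal_minimal:
  assumes w: "(w::'a) \<noteq> 0" and "S \<noteq> {}" and S: "\<And>X. X \<in> S \<Longrightarrow> left_ideal X \<and> w \<in> X"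
  shows "\<exists>M\<in>S. \<forall>X\<in>S. X \<subseteq> M \<longrightarrow> X = M"
proof -
  have factor: "\<exists>d e. X = lprinc d \<and> w = e * d" if X: "X \<in> S" for X
  proof -
    obtain d where "X = lprinc d" using S[OF X] PID_left_principal by blast
    moreover from this obtain e where "w = e * d" using S[OF X] by (auto simp: lprinc_iff)
    ultimately show ?thesis by blast
  qed
  define T where "T = rprinc ` {e. \<exists>d. lprinc d \<in> S \<and> w = e * d}"
  obtain X where "X \<in> S" using \<open>S \<noteq> {}\<close> by blast
  then obtain d e where "lprinc d \<in> S" "w = e * d" using factor by blast
  then have "rprinc e \<in> T" unfolding T_def by blast
  moreover have "right_ideal Z" if "Z \<in> T" for Z using that right_ideal_rprinc unfolding T_def by blast
  ultimately obtain M where "M \<in> T" and max: "\<forall>Z\<in>T. M \<subseteq> Z \<longrightarrow> Z = M"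
    using right_ideal_maximal[of T] by blast
  then obtain e0 d0 where M: "M = rprinc e0" "lprinc d0 \<in> S" "w = e0 * d0"
    unfolding T_def by blast
  have "d0 \<noteq> 0" "e0 \<noteq> 0" using w M(3) by auto
  show ?thesis
  proof (intro bexI[OF _ M(2)] ballI impI)
    fix Y assume Y: "Y \<in> S" "Y \<subseteq> lprinc d0"
    obtain d e where de: "Y = lprinc d" "w = e * d" using factor[OF Y(1)] by blast
    have "d \<in> lprinc d0" using Y(2) de(1) by auto
    then obtain v where v: "d = v * d0" by (auto simp: lprinc_iff)
    have "e0 * d0 = (e * v) * d0" using M(3) de(2) v by (simp add: mult.assoc)
    then have e0: "e0 = e * v" using PID_mult_right_cancel \<open>d0 \<noteq> 0\<close> by blast
    then have "e0 \<in> rprinc e" by simp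
    then have "M \<subseteq> rprinc e" using M(1) right_ideal_subset[OF right_ideal_rprinc] by blast
    moreover have "rprinc e \<in> T" using Y(1) de unfolding T_def by blast
    ultimately have "rprinc e = rprinc e0" using max M(1) by blast
    then obtain u where "e = e0 * u" using rprinc_self rprinc_iff by metis
    then have "e0 * (u * v) = e0 * 1" using e0 by (metis mult.assoc mult_1_right)
    then have "u * v = 1" using PID_mult_left_cancel \<open>e0 \<noteq> 0\<close> by blast
    then have "lprinc d = lprinc d0" using v lprinc_unit_mult[OF mult_eq_1_is_unit(2)] by simp
    then show "Y = lprinc d0" using de(1) by simp
  qed
qed

lemma irreducible_right_factor:
  assumes a: "(a::'a) \<noteq> 0" "\<not> is_unit a"
  obtains b c where "a = b * c" "irreducible_elem c"
proof -
  define S where "S = lprinc ` {c. a \<in> lprinc c \<and> \<not> is_unit c}"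
  have "lprinc a \<in> S" using a(2) unfolding S_def by simp
  moreover have "left_ideal X" if "X \<in> S" for X using that left_ideal_lprinc unfolding S_def by blast
  ultimately obtain M where "M \<in> S" and max: "\<forall>Y\<in>S. M \<subseteq> Y \<longrightarrow> Y = M"
    using left_ideal_maximal[of S] by blast
  then obtain c where c: "M = lprinc c" "a \<in> lprinc c" "\<not> is_unit c" unfolding S_def by blast
  then obtain b where ab: "a = b * c" by (auto simp: lprinc_iff)
  have "is_unit x \<or> is_unit y" if cxy: "c = x * y" for x y
  proof (rule ccontr)
    assume nu: "\<not> (is_unit x \<or> is_unit y)"
    have "c \<in> lprinc y" using cxy by simp
    then have "lprinc c \<subseteq> lprinc y" by (rule left_ideal_subset[OF left_ideal_lprinc])
    moreover from this have "lprinc y \<in> S" using c(2) nu unfolding S_def by auto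
    ultimately have "lprinc y = lprinc c" using max c(1) by blast
    then obtain u where "y = u * c" using lprinc_self lprinc_iff by metis
    then have "(u * x) * y = 1 * y" using cxy by (metis mult.assoc mult_1_left)
    moreover have "y \<noteq> 0" using a(1) ab cxy by auto
    ultimately have "u * x = 1" using PID_mult_right_cancel by blast
    then show False using nu mult_eq_1_is_unit by blast
  qed
  then have "irreducible_elem c" using c(3) unfolding irreducible_elem_def by blast
  with ab show thesis by (rule that)
qed

lemma irreducible_left_factor:
  assumes a: "(a::'a) \<noteq> 0" "\<not> is_unit a"
  obtains b c where "a = b * c" "irreducible_elem b"
proof -
  define S where "S = rprinc ` {b. a \<in> rprinc b \<and> \<not> is_unit b}"
  have "rprinc a \<in> S" using a(2) unfolding S_def by simp
  moreover have "right_ideal X" if "X \<in> S" for X using that right_ideal_rprinc unfolding S_def by blast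
  ultimately obtain M where "M \<in> S" and max: "\<forall>Y\<in>S. M \<subseteq> Y \<longrightarrow> Y = M"
    using right_ideal_maximal[of S] by blast
  then obtain b where b: "M = rprinc b" "a \<in> rprinc b" "\<not> is_unit b" unfolding S_def by blast
  then obtain c where ab: "a = b * c" by (auto simp: rprinc_iff)
  have "is_unit x \<or> is_unit y" if bxy: "b = x * y" for x y
  proof (rule ccontr)
    assume nu: "\<not> (is_unit x \<or> is_unit y)"
    have "b \<in> rprinc x" using bxy by simp
    then have "rprinc b \<subseteq> rprinc x" by (rule right_ideal_subset[OF right_ideal_rprinc])
    moreover from this have "rprinc x \<in> S" using b(2) nu unfolding S_def by auto
    ultimately have "rprinc x = rprinc b" using max b(1) by blast
    then obtain u where "x = b * u" using rprinc_self rprinc_iff by metis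
    then have "x * (y * u) = x * 1" using bxy by (metis mult.assoc mult_1_right)
    moreover have "x \<noteq> 0" using a(1) ab bxy by auto
    ultimately have "y * u = 1" using PID_mult_left_cancel by blast
    then show False using nu mult_eq_1_is_unit by blast
  qed
  then have "irreducible_elem b" using b(3) unfolding irreducible_elem_def by blast
  with ab show thesis by (rule that)
qed

lemma two_sided_ideal_invariant_generator:
  assumes W: "two_sided_ideal (W::'a set)" "W \<noteq> {0}"
  obtains w where "w \<noteq> 0" "W = lprinc w" "invariant_elem w"
proof -
  have WL: "left_ideal W" and WR: "right_ideal W" using W(1) unfolding two_sided_ideal_def by auto
  obtain g where g: "W = lprinc g" using PID_left_principal[OF WL] by blast
  obtain h where h: "W = rprinc h" using PID_right_principal[OF WR] by blast
  have "g \<noteq> 0" using W(2) g by (auto simp: lprinc_iff)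
  have "h \<in> lprinc g" using g h rprinc_self by blast
  then obtain v where v: "h = v * g" by (auto simp: lprinc_iff)
  have "v \<noteq> 0" using W(2) h v by (auto simp: rprinc_iff)
  have "invariant_elem g"
  proof (rule invariant_elemI)
    fix x
    have "g * x \<in> W" using right_ideal_mult[OF WR] g lprinc_self by blast
    then show "\<exists>y. g * x = y * g" using g by (auto simp: lprinc_iff)
  next
    fix x
    have "(v * x) * g \<in> W" using g by simp
    then obtain y where "(v * x) * g = h * y" using h by (auto simp: rprinc_iff)
    then have "v * (x * g) = v * (g * y)" using v by (simp add: mult.assoc)
    then have "x * g = g * y" using PID_mult_left_cancel \<open>v \<noteq> 0\<close> by blast
    then show "\<exists>y. x * g = g * y" by blast
  qed
  with \<open>g \<noteq> 0\<close> g show thesis by (rule that)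
qed

lemma invariant_in_lprinc_left_factor:
  assumes z: "invariant_elem z" and zbc: "z \<in> lprinc (b * c)" and c: "(c::'a) \<noteq> 0"
  shows "z \<in> lprinc b"
proof -
  obtain k where k: "z = k * (b * c)" using zbc by (auto simp: lprinc_iff)
  obtain y where "z * c = y * z" using invariant_swap_right[OF z] by blast
  then have "z * c = (y * k * b) * c" using k by (simp add: mult.assoc)
  then have "z = y * k * b" using PID_mult_right_cancel c by blast
  then show ?thesis by simp
qed

lemma bound_ideal_nonzero:
  assumes "invariant_elem z" "z \<noteq> 0" "z \<in> lprinc (b * c)" "(c::'a) \<noteq> 0"
  shows "bound_ideal b \<noteq> {0}"
  using invariant_in_bound_ideal[OF assms(1) invariant_in_lprinc_left_factor[OF assms(1,3,4)]]
    assms(2) by blast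

text \<open>\<open>Rw + Rc = R\<close> with \<open>w\<close> invariant gives \<open>Rw\<^sup>k + Rc = R\<close> for every \<open>k\<close>.\<close>

lemma invariant_in_lprinc_of_power:
  assumes c: "irreducible_elem (c::'a)" and w: "invariant_elem w" and wn: "w ^ n \<in> lprinc c"
  shows "w \<in> lprinc c"
proof (rule ccontr)
  assume "w \<notin> lprinc c"
  then obtain \<mu> \<nu> where \<mu>\<nu>: "1 = \<mu> * w + \<nu> * c" using irreducible_comaximal[OF c] by blast
  have "\<exists>\<gamma> \<delta>. 1 = \<gamma> * w ^ k + \<delta> * c" for k
  proof (induction k)
    case 0
    show ?case by (rule exI[of _ 1], rule exI[of _ 0]) simp
  next
    case (Suc k)
    then obtain \<gamma> \<delta> where \<gamma>\<delta>: "1 = \<gamma> * w ^ k + \<delta> * c" by blast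
    obtain \<mu>' where \<mu>': "w ^ k * \<mu> = \<mu>' * w ^ k"
      using invariant_swap_right[OF invariant_elem_power[OF w]] by blast
    have "1 = \<gamma> * w ^ k * (\<mu> * w + \<nu> * c) + \<delta> * c" using \<gamma>\<delta> \<mu>\<nu> by simp
    also have "\<dots> = \<gamma> * (w ^ k * \<mu>) * w + (\<gamma> * w ^ k * \<nu> + \<delta>) * c"
      by (simp add: algebra_simps)
    also have "\<dots> = (\<gamma> * \<mu>') * w ^ Suc k + (\<gamma> * w ^ k * \<nu> + \<delta>) * c"
      by (simp add: \<mu>' mult.assoc power_commutes)
    finally show ?case by blast
  qed
  then obtain \<gamma> \<delta> where "1 = \<gamma> * w ^ n + \<delta> * c" by blast
  then have "1 \<in> lprinc c" using lprinc_add[OF lprinc_mult[OF wn]] by (metis mult_in_lprinc)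
  then show False using c is_unit_iff_one_in_lprinc unfolding irreducible_elem_def by blast
qed

section \<open>Fitting's lemma\<close>

text \<open>The kernels of \<open>z\<^sup>n\<close> on \<open>R/Ra\<close> increase and the images decrease; both become
  stationary by ACC for left ideals and DCC for left ideals containing \<open>a \<noteq> 0\<close>.\<close>

lemma kernel_image_mod_stable:
  assumes a: "(a::'a) \<noteq> 0" and z: "invariant_elem z"
  obtains N where "N > 0" "kernel_mod (z ^ (N + N)) a = kernel_mod (z ^ N) a"
    "image_mod (z ^ (N + N)) a = image_mod (z ^ N) a"
proof -
  let ?K = "\<lambda>n. kernel_mod (z ^ n) a" and ?I = "\<lambda>n. image_mod (z ^ n) a"
  have "left_ideal X" if "X \<in> range ?K" for X
    using that left_ideal_kernel_mod[OF invariant_elem_power[OF z]] by blast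
  then obtain N1 where N1: "\<forall>X\<in>range ?K. ?K N1 \<subseteq> X \<longrightarrow> X = ?K N1"
    using left_ideal_maximal[of "range ?K"] by blast
  have K_stable: "?K n = ?K N1" if "N1 \<le> n" for n
    using N1 kernel_mod_power_mono[OF that] by blast
  have "left_ideal X \<and> a \<in> X" if X: "X \<in> range ?I" for X
  proof -
    obtain n where n: "X = ?I n" using X by blast
    have "a \<in> ?I n" using lprinc_subset_image_mod lprinc_self by blast
    then show ?thesis using n left_ideal_image_mod[OF invariant_elem_power[OF z]] by simp
  qed
  then obtain N2 where N2: "\<forall>X\<in>range ?I. X \<subseteq> ?I N2 \<longrightarrow> X = ?I N2"
    using left_ideal_minimal[OF a, of "range ?I"] by blast
  have I_stable: "?I n = ?I N2" if "N2 \<le> n" for n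
    using N2 image_mod_power_antimono[OF that] by blast
  define N where "N = Suc (max N1 N2)"
  show thesis
  proof (rule that)
    show "N > 0" by (simp add: N_def)
    show "?K (N + N) = ?K N" "?I (N + N) = ?I N"
      using K_stable[of N] K_stable[of "N + N"] I_stable[of N] I_stable[of "N + N"]
      by (simp_all add: N_def)
  qed
qed

lemma fitting_decomposition:
  assumes a: "(a::'a) \<noteq> 0" and z: "invariant_elem z"
  obtains N where "N > 0" "kernel_mod (z ^ N) a \<inter> image_mod (z ^ N) a \<subseteq> lprinc a"
    "\<And>m. \<exists>j\<in>kernel_mod (z ^ N) a. \<exists>i\<in>image_mod (z ^ N) a. m = j + i"
proof -
  let ?K = "\<lambda>n. kernel_mod (z ^ n) a" and ?I = "\<lambda>n. image_mod (z ^ n) a"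
  obtain N where N: "N > 0" and KK: "?K (N + N) = ?K N" and II: "?I (N + N) = ?I N"
    using kernel_image_mod_stable[OF a z] by blast
  show thesis
  proof (rule that)
    show "N > 0" by (rule N)
    show "?K N \<inter> ?I N \<subseteq> lprinc a"
    proof
      fix x assume x: "x \<in> ?K N \<inter> ?I N"
      then obtain y k where xyk: "x = z ^ N * y + k * a" by (auto simp: image_mod_def)
      have "z ^ (N + N) * y = z ^ N * x - (z ^ N * k) * a"
        by (simp add: xyk distrib_left power_add mult.assoc)
      moreover have "z ^ N * x \<in> lprinc a" using x by (simp add: kernel_mod_def)
      ultimately have "y \<in> ?K (N + N)"
        using lprinc_diff[of _ a "(z ^ N * k) * a"] by (simp add: kernel_mod_def)
      then have "y \<in> ?K N" using KK by simp
      then have "z ^ N * y \<in> lprinc a" by (simp add: kernel_mod_def)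
      then show "x \<in> lprinc a" by (simp add: xyk lprinc_add)
    qed
    fix m
    have "z ^ N * m \<in> ?I (N + N)" using II mult_in_image_mod by blast
    then obtain y k where "z ^ N * m = z ^ (N + N) * y + k * a" by (auto simp: image_mod_def)
    then have "z ^ N * (m - z ^ N * y) = k * a"
      by (simp add: right_diff_distrib power_add mult.assoc)
    then have "m - z ^ N * y \<in> ?K N" by (simp add: kernel_mod_def)
    moreover have "z ^ N * y \<in> ?I N" by (rule mult_in_image_mod)
    ultimately show "\<exists>j\<in>?K N. \<exists>i\<in>?I N. m = j + i" by force
  qed
qed

text \<open>\<open>R/Ra = Rd/Ra \<oplus> Rd'/Ra\<close>, so right multiplication by \<open>d\<close> gives
  \<open>R/Re \<cong> Rd/Ra \<cong> R/Rd'\<close>.\<close>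

lemma similar_of_decomposition:
  assumes ae: "a = e * d" and d: "(d::'a) \<noteq> 0" and a: "a \<in> lprinc d'"
    and cap: "lprinc d \<inter> lprinc d' \<subseteq> lprinc a"
    and sum: "\<And>m. \<exists>j\<in>lprinc d. \<exists>i\<in>lprinc d'. m = j + i"
  shows "similar e d'"
proof (rule similar_by_right_mult)
  show "x * d \<in> lprinc d' \<longleftrightarrow> x \<in> lprinc e" for x
  proof
    assume "x * d \<in> lprinc d'"
    then have "x * d \<in> lprinc a" using cap by auto
    then obtain k where "x * d = (k * e) * d" using ae by (auto simp: lprinc_iff mult.assoc)
    then have "x = k * e" using PID_mult_right_cancel d by blast
    then show "x \<in> lprinc e" by simp
  next
    assume "x \<in> lprinc e"
    then have "x * d \<in> lprinc a" using ae by (auto simp: lprinc_iff mult.assoc)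
    then show "x * d \<in> lprinc d'" using a lprinc_trans by blast
  qed
  show "\<exists>x. y - x * d \<in> lprinc d'" for y
  proof -
    obtain j i where ji: "j \<in> lprinc d" "i \<in> lprinc d'" "y = j + i" using sum by blast
    obtain x where "j = x * d" using ji(1) by (auto simp: lprinc_iff)
    then have "y - x * d = i" using ji(3) by simp
    then show ?thesis using ji(2) by auto
  qed
qed

lemma c_reducible_of_decomposition:
  assumes a: "(a::'a) \<noteq> 0" and J: "left_ideal J" "a \<in> J" and I: "left_ideal I" "a \<in> I"
    and cap: "J \<inter> I \<subseteq> lprinc a" and sum: "\<And>m. \<exists>j\<in>J. \<exists>i\<in>I. m = j + i"
    and nontrivial: "\<not> J \<subseteq> lprinc a" "J \<noteq> UNIV"
  shows "c_reducible a"
proof -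
  obtain d where Jd: "J = lprinc d" using PID_left_principal[OF J(1)] by blast
  obtain d' where Id: "I = lprinc d'" using PID_left_principal[OF I(1)] by blast
  obtain e where ae: "a = e * d" using J(2) Jd by (auto simp: lprinc_iff)
  obtain e' where ae': "a = e' * d'" using I(2) Id by (auto simp: lprinc_iff)
  have "d \<noteq> 0" using a ae by auto
  then have "similar e d'"
    by (rule similar_of_decomposition[OF ae]) (use I(2) cap sum in \<open>simp_all add: Jd Id\<close>)
  moreover have "\<not> is_unit e"
    using lprinc_unit_mult[of e d] ae Jd nontrivial(1) by auto
  moreover have "\<not> is_unit d"
    using lprinc_unit[of d] Jd nontrivial(2) by auto
  moreover have "\<not> is_unit d'"
    using lprinc_unit[of d'] Id cap nontrivial(1) by auto
  moreover have "\<not> is_unit e'"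
  proof
    assume "is_unit e'"
    then have "I = lprinc a" using lprinc_unit_mult[of e' d'] ae' Id by simp
    then have "I \<subseteq> J" using left_ideal_subset[OF J] by simp
    have "m \<in> J" for m
    proof -
      obtain j i where "j \<in> J" "i \<in> I" "m = j + i" using sum by blast
      then show ?thesis using \<open>I \<subseteq> J\<close> left_ideal_add[OF J(1)] by blast
    qed
    then show False using nontrivial(2) by blast
  qed
  ultimately show ?thesis using c_reducibleI[OF a ae ae'] by blast
qed

lemma fitting_trichotomy:
  assumes a: "(a::'a) \<noteq> 0" and z: "invariant_elem z"
  obtains "c_reducible a" | N where "z ^ N \<in> lprinc a" | "kernel_mod z a \<subseteq> lprinc a"
proof -
  obtain N where N: "N > 0" "kernel_mod (z ^ N) a \<inter> image_mod (z ^ N) a \<subseteq> lprinc a"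
    "\<And>m. \<exists>j\<in>kernel_mod (z ^ N) a. \<exists>i\<in>image_mod (z ^ N) a. m = j + i"
    using fitting_decomposition[OF a z] by blast
  let ?K = "kernel_mod (z ^ N) a"
  consider "?K = UNIV" | "?K \<subseteq> lprinc a" | "\<not> ?K \<subseteq> lprinc a" "?K \<noteq> UNIV" by blast
  then show thesis
  proof cases
    case 1
    then have "z ^ N \<in> lprinc a" unfolding kernel_mod_def by (metis UNIV_I mem_Collect_eq mult_1_right)
    then show thesis by (rule that(2))
  next
    case 2
    then show thesis using that(3) kernel_mod_power_mono[of 1 N z a] N(1) by simp
  next
    case 3
    have "c_reducible a"
    proof (rule c_reducible_of_decomposition[OF a _ _ _ _ N(2,3) 3])
      show "left_ideal ?K" "left_ideal (image_mod (z ^ N) a)"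
        using left_ideal_kernel_mod left_ideal_image_mod invariant_elem_power[OF z] by blast+
      show "a \<in> ?K" "a \<in> image_mod (z ^ N) a"
        using lprinc_subset_kernel_mod lprinc_subset_image_mod lprinc_self by blast+
    qed
    then show thesis by (rule that(1))
  qed
qed

lemma kernel_mod_left_factor:
  assumes inj: "kernel_mod z (r * q) \<subseteq> lprinc (r * q)" and q: "(q::'a) \<noteq> 0"
  shows "kernel_mod z r \<subseteq> lprinc r"
proof
  fix x assume "x \<in> kernel_mod z r"
  then obtain k where "z * x = k * r" by (auto simp: kernel_mod_def lprinc_iff)
  then have "z * (x * q) = k * (r * q)" by (metis mult.assoc)
  then have "x * q \<in> kernel_mod z (r * q)" by (simp add: kernel_mod_def)
  then have "x * q \<in> lprinc (r * q)" using inj by blast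
  then obtain k' where "x * q = (k' * r) * q" by (auto simp: lprinc_iff mult.assoc)
  then have "x = k' * r" using PID_mult_right_cancel q by blast
  then show "x \<in> lprinc r" by simp
qed

lemma one_in_image_mod:
  assumes a: "(a::'a) \<noteq> 0" and z: "invariant_elem z" and inj: "kernel_mod z a \<subseteq> lprinc a"
  shows "1 \<in> image_mod z a"
proof -
  obtain N where N: "N > 0" "kernel_mod (z ^ N) a \<inter> image_mod (z ^ N) a \<subseteq> lprinc a"
    "\<And>m. \<exists>j\<in>kernel_mod (z ^ N) a. \<exists>i\<in>image_mod (z ^ N) a. m = j + i"
    using fitting_decomposition[OF a z] by blast
  obtain j i where ji: "j \<in> kernel_mod (z ^ N) a" "i \<in> image_mod (z ^ N) a" "1 = j + i"
    using N(3)[of 1] by blast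
  have "j \<in> image_mod z a"
    using ji(1) kernel_mod_power_subset[OF inj, of N] lprinc_subset_image_mod[of a z] by blast
  moreover have "i \<in> image_mod z a"
    using ji(2) image_mod_power_antimono[of 1 N z a] N(1) by (simp add: subset_iff)
  ultimately have "j + i \<in> image_mod z a" by (rule left_ideal_add[OF left_ideal_image_mod[OF z]])
  then show ?thesis using ji(3) by simp
qed

text \<open>\<open>z\<close> annihilates \<open>R/Rp\<close> but acts injectively on \<open>R/Ra\<close>, hence on its submodule
  \<open>Rps/Ra \<cong> R/Rr\<close>, where it is then also surjective: \<open>1 \<in> zR + Rr\<close>. This forces
  \<open>s \<in> Rps\<close>, i.e. \<open>p\<close> is a unit.\<close>

lemma is_unit_if_kernel_mod_trivial:
  assumes z: "invariant_elem z" "z \<in> lprinc p" and a: "(a::'a) = r * p * s" "a \<noteq> 0"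
    and inj: "kernel_mod z a \<subseteq> lprinc a"
  shows "is_unit p"
proof -
  have "r * (p * s) \<noteq> 0" using a by (simp add: mult.assoc)
  then have "r \<noteq> 0" "p * s \<noteq> 0" "s \<noteq> 0" by auto
  have "kernel_mod z r \<subseteq> lprinc r"
    using kernel_mod_left_factor[of z r "p * s"] inj a \<open>p * s \<noteq> 0\<close> by (simp add: mult.assoc)
  then have "1 \<in> image_mod z r" using one_in_image_mod \<open>r \<noteq> 0\<close> z(1) by blast
  then obtain y \<beta> where one: "1 = z * y + \<beta> * r" by (auto simp: image_mod_def)
  obtain t where zt: "z = t * p" using z(2) by (auto simp: lprinc_iff)
  obtain g where tz: "t * z = z * g" using invariant_swap_left[OF z(1)] by blast
  have "z * s = t * 1 * p * s" by (simp add: zt mult.assoc)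
  also have "\<dots> = t * (z * y + \<beta> * r) * p * s" by (simp only: one[symmetric])
  also have "\<dots> = (t * z) * (y * p * s) + (t * \<beta>) * (r * p * s)" by (simp add: algebra_simps)
  also have "\<dots> = z * (g * y * p * s) + (t * \<beta>) * a" by (simp add: tz a(1) mult.assoc)
  finally have "z * (s - g * y * p * s) = (t * \<beta>) * a" by (simp add: right_diff_distrib)
  then have "s - g * y * p * s \<in> lprinc a" using inj by (auto simp: kernel_mod_def)
  then obtain \<delta> where "s - g * y * p * s = \<delta> * (r * p * s)" using a(1) by (auto simp: lprinc_iff)
  then have "1 * s = ((g * y + \<delta> * r) * p) * s" by (simp add: algebra_simps eq_diff_eq)
  then have "(g * y + \<delta> * r) * p = 1" using PID_mult_right_cancel \<open>s \<noteq> 0\<close> by metis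
  then show ?thesis by (rule mult_eq_1_is_unit(2))
qed

section \<open>Similarity and the reducible case\<close>

text \<open>Schur's lemma: \<open>x \<mapsto> x \<xi>\<close> induces a nonzero module map \<open>R/Rb \<rightarrow> R/Rc\<close> between
  simple modules.\<close>

lemma similar_if_right_mult_nonzero:
  assumes b: "irreducible_elem (b::'a)" and c: "irreducible_elem c"
    and b\<xi>: "b * \<xi> \<in> lprinc c" and \<xi>: "\<xi> \<notin> lprinc c"
  shows "similar b c"
proof (rule similar_by_right_mult)
  show "x * \<xi> \<in> lprinc c \<longleftrightarrow> x \<in> lprinc b" for x
  proof
    assume x\<xi>: "x * \<xi> \<in> lprinc c"
    show "x \<in> lprinc b"
    proof (rule ccontr)
      assume "x \<notin> lprinc b"
      then obtain \<mu> \<nu> where "1 = \<mu> * x + \<nu> * b" using irreducible_comaximal[OF b] by blast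
      then have "\<xi> = \<mu> * (x * \<xi>) + \<nu> * (b * \<xi>)" by (metis distrib_right mult.assoc mult_1_left)
      moreover have "\<mu> * (x * \<xi>) + \<nu> * (b * \<xi>) \<in> lprinc c"
        using x\<xi> b\<xi> by (simp add: lprinc_add lprinc_mult)
      ultimately show False using \<xi> by simp
    qed
  next
    assume "x \<in> lprinc b"
    then obtain k where "x = k * b" by (auto simp: lprinc_iff)
    then show "x * \<xi> \<in> lprinc c" using b\<xi> by (simp add: mult.assoc lprinc_mult)
  qed
  show "\<exists>x. y - x * \<xi> \<in> lprinc c" for y
  proof -
    obtain \<rho> \<tau> where "1 = \<rho> * \<xi> + \<tau> * c" using irreducible_comaximal[OF c \<xi>] by blast
    then have "y - (y * \<rho>) * \<xi> = (y * \<tau>) * c" by (metis add_diff_cancel_left' distrib_left mult.assoc mult_1_right)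
    then show ?thesis by (metis mult_in_lprinc)
  qed
qed

text \<open>Since \<open>Rb\<close> is a maximal left ideal, \<open>x\<^sub>0 y\<close> generates \<open>R/Rb\<close>: \<open>1 \<equiv> \<xi> y\<close> with
  \<open>\<xi> \<in> X\<close>, and \<open>x \<equiv> x y \<xi>\<close> modulo \<open>Rc\<close> for all \<open>x \<in> X\<close>.\<close>

lemma similar_of_kernel_subset:
  assumes b: "irreducible_elem (b::'a)" and c: "irreducible_elem c" and X: "left_ideal X"
    and ker: "\<And>x. x \<in> X \<Longrightarrow> x * y \<in> lprinc b \<Longrightarrow> x \<in> lprinc c"
    and x0: "x0 \<in> X" "x0 \<notin> lprinc c"
  shows "similar b c"
proof -
  have "x0 * y \<notin> lprinc b" using ker x0 by blast
  then obtain \<mu> \<nu> where \<mu>\<nu>: "1 = \<mu> * (x0 * y) + \<nu> * b" using irreducible_comaximal[OF b] by blast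
  define \<xi> where "\<xi> = \<mu> * x0"
  have \<xi>X: "\<xi> \<in> X" unfolding \<xi>_def using left_ideal_mult[OF X x0(1)] .
  have \<xi>y: "1 - \<xi> * y = \<nu> * b" using \<mu>\<nu> unfolding \<xi>_def by (simp add: algebra_simps)
  have "x0 - x0 * y * \<xi> \<in> lprinc c"
  proof (rule ker)
    show "x0 - x0 * y * \<xi> \<in> X" using left_ideal_diff[OF X x0(1) left_ideal_mult[OF X \<xi>X]] .
    have "(x0 - x0 * y * \<xi>) * y = (x0 * y * \<nu>) * b" by (simp add: algebra_simps flip: \<xi>y)
    then show "(x0 - x0 * y * \<xi>) * y \<in> lprinc b" by simp
  qed
  then have "\<xi> \<notin> lprinc c"
    using x0(2) lprinc_add[OF _ lprinc_mult[of \<xi> c "x0 * y"]] by fastforce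
  moreover have "b * \<xi> \<in> lprinc c"
  proof (rule ker)
    show "b * \<xi> \<in> X" using left_ideal_mult[OF X \<xi>X] .
    have "(b * \<xi>) * y = (1 - b * \<nu>) * b" by (simp add: algebra_simps flip: \<xi>y)
    then show "(b * \<xi>) * y \<in> lprinc b" by simp
  qed
  ultimately show ?thesis using similar_if_right_mult_nonzero[OF b c] by blast
qed

text \<open>Take \<open>X\<close> minimal among the left ideals containing some \<open>w \<noteq> 0\<close> of the bound and not
  contained in \<open>Rc\<close>. Unless \<open>b\<close> and \<open>c\<close> are similar, \<open>X \<inter> {x. x y \<in> Rb}\<close> is again such an
  ideal for every \<open>y\<close>, so \<open>X \<subseteq> bound_ideal b \<subseteq> Rc\<close>.\<close>

lemma similar_of_bound_ideal_subset:
  assumes b: "irreducible_elem (b::'a)" and c: "irreducible_elem c"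
    and sub: "bound_ideal b \<subseteq> lprinc c" and ne: "bound_ideal b \<noteq> {0}"
  shows "similar b c"
proof (rule ccontr)
  assume nsim: "\<not> similar b c"
  have "0 \<in> bound_ideal b" by (simp add: bound_ideal_def)
  then obtain w where w: "w \<in> bound_ideal b" "w \<noteq> 0" using ne by blast
  define S where "S = {X. left_ideal X \<and> w \<in> X \<and> \<not> X \<subseteq> lprinc c}"
  have "1 \<notin> lprinc c" using c is_unit_iff_one_in_lprinc unfolding irreducible_elem_def by blast
  then have "UNIV \<in> S" unfolding S_def using left_ideal_UNIV by blast
  moreover have "left_ideal Y \<and> w \<in> Y" if "Y \<in> S" for Y using that unfolding S_def by blast
  ultimately obtain X where X: "X \<in> S" and min: "\<forall>Y\<in>S. Y \<subseteq> X \<longrightarrow> Y = X"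
    using left_ideal_minimal[OF w(2), of S] by blast
  then have XL: "left_ideal X" "w \<in> X" "\<not> X \<subseteq> lprinc c" unfolding S_def by auto
  have "X \<subseteq> {x. x * y \<in> lprinc b}" for y
  proof -
    let ?Y = "X \<inter> {x. x * y \<in> lprinc b}"
    have "left_ideal {x. x * y \<in> lprinc b}"
      by (rule left_idealI) (simp_all add: distrib_right lprinc_add mult.assoc lprinc_mult)
    then have "left_ideal ?Y" using left_ideal_Int XL(1) by blast
    moreover have "w \<in> ?Y" using w(1) XL(2) unfolding bound_ideal_def by blast
    moreover have "\<not> ?Y \<subseteq> lprinc c"
    proof
      assume Yc: "?Y \<subseteq> lprinc c"
      obtain x0 where "x0 \<in> X" "x0 \<notin> lprinc c" using XL(3) by blast
      moreover have "x \<in> lprinc c" if "x \<in> X" "x * y \<in> lprinc b" for x using that Yc by blast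
      ultimately have "similar b c" using similar_of_kernel_subset[OF b c XL(1), of y x0] by blast
      then show False using nsim by blast
    qed
    ultimately have "?Y \<in> S" by (simp add: S_def)
    then have Y: "?Y = X" using min[rule_format, OF _ Int_lower1] by blast
    have "?Y \<subseteq> {x. x * y \<in> lprinc b}" by (rule Int_lower2)
    then show ?thesis unfolding Y .
  qed
  then have "X \<subseteq> bound_ideal b" unfolding bound_ideal_def by blast
  then show False using sub XL(3) by blast
qed

lemma c_reducible_if_power_in_lprinc:
  assumes a: "(a::'a) \<noteq> 0" "\<not> is_unit a" "\<not> irreducible_elem a"
    and z: "invariant_elem z" "z \<noteq> 0" "z ^ n \<in> lprinc a"
  shows "c_reducible a"
proof (rule ccontr)
  assume nred: "\<not> c_reducible a"
  obtain b c where bc: "a = b * c" "irreducible_elem c"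
    using irreducible_right_factor[OF a(1,2)] by blast
  obtain b' c' where bc': "a = b' * c'" "irreducible_elem b'"
    using irreducible_left_factor[OF a(1,2)] by blast
  have "\<not> is_unit b" using irreducible_unit_mult[OF _ bc(2)] bc(1) a(3) by auto
  moreover have "\<not> is_unit c'" using irreducible_mult_unit[OF _ bc'(2)] bc'(1) a(3) by auto
  moreover have "\<not> is_unit c" "\<not> is_unit b'" using bc(2) bc'(2) unfolding irreducible_elem_def by auto
  ultimately have nsim: "\<not> similar b' c" using nred c_reducibleI[OF a(1) bc'(1) bc(1)] by blast
  have "c' \<noteq> 0" using a(1) bc'(1) by auto
  moreover have "z ^ n \<in> lprinc (b' * c')" using z(3) bc'(1) by simp
  ultimately have ne: "bound_ideal b' \<noteq> {0}"
    using bound_ideal_nonzero[OF invariant_elem_power[OF z(1)] PID_power_nonzero[OF z(2)]] by blast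
  then obtain w where w: "bound_ideal b' = lprinc w" "invariant_elem w"
    using two_sided_ideal_invariant_generator[OF two_sided_ideal_bound_ideal ne] by blast
  show False
  proof (cases rule: fitting_trichotomy[OF a(1) w(2)])
    case 1
    then show False using nred by blast
  next
    case (2 m)
    moreover have "a \<in> lprinc c" using bc(1) by simp
    ultimately have "w ^ m \<in> lprinc c" by (rule lprinc_trans)
    then have "w \<in> lprinc c" using invariant_in_lprinc_of_power[OF bc(2) w(2)] by blast
    then have "bound_ideal b' \<subseteq> lprinc c" using w(1) left_ideal_subset[OF left_ideal_lprinc] by blast
    then show False using similar_of_bound_ideal_subset[OF bc'(2) bc(2) _ ne] nsim by blast
  next
    case 3
    have "w \<in> lprinc b'" using w(1) bound_ideal_subset lprinc_self by blast
    moreover have "a = 1 * b' * c'" using bc'(1) by simp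
    ultimately have "is_unit b'" using is_unit_if_kernel_mod_trivial[OF w(2) _ _ a(1) 3] by blast
    then show False using \<open>\<not> is_unit b'\<close> by blast
  qed
qed

lemma irreducible_if_not_c_reducible:
  assumes a: "(a::'a) \<noteq> 0" "a = r * p * s" and p: "bounded_elem p" "\<not> is_unit p"
    and nred: "\<not> c_reducible a"
  shows "irreducible_elem a"
proof (rule ccontr)
  assume nirr: "\<not> irreducible_elem a"
  have "\<not> is_unit a" using is_unit_multD(1)[of "r * p" s] is_unit_multD(2)[of r p] a(2) p(2) by blast
  obtain I where I: "two_sided_ideal I" "I \<noteq> {0}" "I \<subseteq> lprinc p"
    using p(1) unfolding bounded_elem_def by blast
  obtain z where z: "z \<noteq> 0" "I = lprinc z" "invariant_elem z"
    using two_sided_ideal_invariant_generator[OF I(1,2)] by blast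
  have "z \<in> lprinc p" using I(3) z(2) lprinc_self by blast
  show False
  proof (cases rule: fitting_trichotomy[OF a(1) z(3)])
    case 1
    then show False using nred by blast
  next
    case (2 n)
    then show False
      using c_reducible_if_power_in_lprinc[OF a(1) \<open>\<not> is_unit a\<close> nirr z(3,1)] nred by blast
  next
    case 3
    then show False
      using is_unit_if_kernel_mod_trivial[OF z(3) \<open>z \<in> lprinc p\<close> a(2,1)] p(2) by blast
  qed
qed

end

theorem proposition3p7:
  fixes a :: "'a::ring_1"
  assumes "is_PID TYPE('a)"
    and "a \<noteq> 0"
    and "\<exists>r p s. a = r * p * s \<and> bounded_elem p \<and> \<not> is_unit p"
  shows "c_irreducible a \<longleftrightarrow> irreducible_elem a"
proof
  assume "c_irreducible a"
  moreover obtain r p s where "a = r * p * s" "bounded_elem p" "\<not> is_unit p" using assms(3) by blast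
  ultimately show "irreducible_elem a"
    using irreducible_if_not_c_reducible[OF assms(1,2)] unfolding c_irreducible_def by blast
qed (rule c_irreducible_if_irreducible)

end
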